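(* Let $a$ and $p$ be trigonometric polynomials such that $a$ satisfies the UEP identities with trigonometric polynomials $b_1,\dots,b_{J_a}$, and $p$ satisfies the UEP identities with trigonometric polynomials $q_1,\dots,q_{J_p}$. Then the product $ap$ satisfies the UEP identities with the family \[\{p\,b_j : j=1,\dots,J_a\}\cup\{a\,q_j : j=1,\dots,J_p\}\cup\{q_j\,b_k : j=1,\dots,J_p,\ k=1,\dots,J_a\}.\] Moreover, if the subdivision schemes associated to $a$, $p$ and $ap$ are convergent and the families $b_1,\dots,b_{J_a}$ and $q_1,\dots,q_{J_p}$ have $v_a$ and $v_p$ vanishing moments respectively, then the family above (for $ap$) has $v=\min\{v_a,v_p\}$ vanishing moments.
   Context: Trigonometric polynomials are written as $p(\omega)=\frac12\sum_{k\in\mathbb{Z}}\mathbf{p}(k)e^{i2k\pi\omega}$ with finitely supported coefficient sequence (mask) $\mathbf{p}$, $\omega\in[0,1)$. A trigonometric polynomial $p$ satisfies the UEP identities with trigonometric polynomials $q_1,\dots,q_J$ if for all $\omega\in[0,1)$: $p(\omega)\overline{p(\omega)}+\sum_{j=1}^J q_j(\omega)\overline{q_j(\omega)}=1$ and $p(\omega)\overline{p(\omega-1/2)}+\sum_{j=1}^J q_j(\omega)\overline{q_j(\omega-1/2)}=0$. The subdivision scheme associated to $p$ is the stationary scheme on $\mathbb{Z}$ with bi-infinite matrix $\mathbf{P}(k,m)=\mathbf{p}(k-2m)$; it is convergent if for each $k$ there is a continuous $\varphi_k$ with $\sup_m|\varphi_k(2^{-j}m)-(\mathbf{P}^j\delta_k)(m)|\to0$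 as $j\to\infty$ ($\delta_k$ the unit sequence at $k$). The number of vanishing moments of a family $q_1,\dots,q_J$ is $v=\min_{j}\mu_j$, where $\mu_j$ is the order of the zero of $q_j$ at $\omega=0$, i.e. $q_j^{(k)}(0)=0$ for $k=0,\dots,\mu_j-1$ and $q_j^{(\mu_j)}(0)\neq0$. *)

theory Defs
  imports "HOL-Analysis.Analysis"
begin

text \<open>The trigonometric
polynomial with mask m, p(w) = 1/2 * sum_k m(k) e^(i 2 k pi w), is extended
to complex arguments (it is entire) so that iterated derivatives are available.\<close>

definition fin_supp :: "(int \<Rightarrow> complex) \<Rightarrow> bool" where
  "fin_supp m \<longleftrightarrow> finite {k. m k \<noteq> 0}"

definition tp :: "(int \<Rightarrow> complex) \<Rightarrow> complex \<Rightarrow> complex" where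
  "tp m w = (1/2) * (\<Sum>k\<in>{k. m k \<noteq> 0}. m k * exp (\<i> * 2 * of_int k * of_real pi * w))"

text \<open>Mask of the product of two trigonometric polynomials:
tp (mask_mult a p) = tp a * tp p.\<close>
definition mask_mult :: "(int \<Rightarrow> complex) \<Rightarrow> (int \<Rightarrow> complex) \<Rightarrow> int \<Rightarrow> complex" where
  "mask_mult a p k = (1/2) * (\<Sum>l\<in>{l. a l \<noteq> 0}. a l * p (k - l))"

definition UEP :: "(int \<Rightarrow> complex) \<Rightarrow> (int \<Rightarrow> complex) list \<Rightarrow> bool" where
  "UEP p qs \<longleftrightarrow> (\<forall>w::real. 0 \<le> w \<and> w < 1 \<longrightarrow>
      tp p (of_real w) * cnj (tp p (of_real w))
        + (\<Sum>q\<leftarrow>qs. tp q (of_real w) * cnj (tp q (of_real w))) = 1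
    \<and> tp p (of_real w) * cnj (tp p (of_real (w - 1/2)))
        + (\<Sum>q\<leftarrow>qs. tp q (of_real w) * cnj (tp q (of_real (w - 1/2)))) = 0)"

definition subdiv_step :: "(int \<Rightarrow> complex) \<Rightarrow> (int \<Rightarrow> complex) \<Rightarrow> int \<Rightarrow> complex" where
  "subdiv_step p c k = (\<Sum>m\<in>{m. p (k - 2 * m) \<noteq> 0}. p (k - 2 * m) * c m)"

definition unit_seq :: "int \<Rightarrow> int \<Rightarrow> complex" where
  "unit_seq k m = (if m = k then 1 else 0)"

definition subdiv_convergent :: "(int \<Rightarrow> complex) \<Rightarrow> bool" where
  "subdiv_convergent p \<longleftrightarrow> (\<forall>k::int. \<exists>\<phi>::real \<Rightarrow> complex. continuous_on UNIV \<phi> \<and>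
     (\<forall>\<epsilon>>0. \<exists>N. \<forall>j\<ge>N. \<forall>m::int.
        norm (\<phi> (of_int m / 2 ^ j) - ((subdiv_step p ^^ j) (unit_seq k)) m) < \<epsilon>))"

text \<open>The family qs has exactly v vanishing moments: v is the minimum over j of the
order of the zero of q_j at 0 (all derivatives of order < v vanish for every q_j,
and some q_j has nonzero derivative of order v).\<close>
definition vanishing_moments :: "(int \<Rightarrow> complex) list \<Rightarrow> nat \<Rightarrow> bool" where
  "vanishing_moments qs v \<longleftrightarrow>
     (\<forall>q\<in>set qs. \<forall>k<v. (deriv ^^ k) (tp q) 0 = 0) \<and>
     (\<exists>q\<in>set qs. (deriv ^^ v) (tp q) 0 \<noteq> 0)"

end

theory Submission
  imports Defs "HOL-Complex_Analysis.Cauchy_Integral_Formula"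
begin

text \<open>The mask product is the Cauchy product of coefficient sequences, so the
trigonometric polynomial of a p is the pointwise product of those of a and p. Write the
UEP identities for p as S_p(w, w) = 1 and S_p(w, w - 1/2) = 0, where
S_p(w, w') = p(w) cnj p(w') + sum_j q_j(w) cnj q_j(w'). For a p and the product family this
sum factors as S_a(w, w') S_p(w, w'), which gives the UEP identities for a p.

For the vanishing moments, the Leibniz rule shows that every member of the product family
vanishes to order at least min v_a v_p at 0. Equality is witnessed by a q_j (if v_p < v_a),
by p b_k (if v_a \<le> v_p and v_p > 0), or by q_j b_k (if v_a = v_p = 0). In the first two
cases the low-pass factor does not vanish at 0, because the UEP identity at w = 0 reads
|a(0)|^2 + sum_k |b_k(0)|^2 = 1 and the b_k vanish there.\<close>

lemma tp_eq_sum_superset: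
  assumes "finite S" "{k. m k \<noteq> 0} \<subseteq> S"
  shows "tp m w = 1/2 * (\<Sum>k\<in>S. m k * exp (\<i> * 2 * of_int k * of_real pi * w))"
  unfolding tp_def using assms by (subst sum.mono_neutral_left[of S]) auto

lemma support_mask_mult_subset:
  "{k. mask_mult a p k \<noteq> 0} \<subseteq> (\<lambda>(l, n). l + n) ` ({l. a l \<noteq> 0} \<times> {n. p n \<noteq> 0})"
proof
  fix k assume "k \<in> {k. mask_mult a p k \<noteq> 0}"
  then have "(\<Sum>l\<in>{l. a l \<noteq> 0}. a l * p (k - l)) \<noteq> 0"
    unfolding mask_mult_def by simp
  from sum.not_neutral_contains_not_neutral[OF this]
  obtain l where "a l \<noteq> 0" "p (k - l) \<noteq> 0" by auto
  then show "k \<in> (\<lambda>(l, n). l + n) ` ({l. a l \<noteq> 0} \<times> {n. p n \<noteq> 0})"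
    by (auto intro!: image_eqI[of _ _ "(l, k - l)"])
qed

lemma tp_mask_mult:
  assumes "fin_supp a" "fin_supp p"
  shows "tp (mask_mult a p) w = tp a w * tp p w"
proof -
  define e where "e k = exp (\<i> * 2 * of_int k * of_real pi * w)" for k :: int
  define A where "A = {l. a l \<noteq> 0}"
  define P where "P = {n. p n \<noteq> 0}"
  define T where "T = (\<lambda>(l, n). l + n) ` (A \<times> P)"
  have fin: "finite A" "finite P" "finite T"
    using assms unfolding fin_supp_def A_def P_def T_def by auto
  have e_add: "e (l + n) = e l * e n" for l n
    unfolding e_def by (simp add: exp_add[symmetric] algebra_simps)
  have shift: "(\<Sum>k\<in>T. p (k - l) * e k) = e l * (\<Sum>n\<in>P. p n * e n)" if "l \<in> A" for l
  proof -
    have "(\<Sum>k\<in>T. p (k - l) * e k) = (\<Sum>k\<in>(+) l ` P. p (k - l) * e k)"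
    proof (rule sum.mono_neutral_right)
      show "(+) l ` P \<subseteq> T" using that by (auto simp: T_def)
      show "\<forall>k\<in>T - (+) l ` P. p (k - l) * e k = 0"
        by (auto simp: P_def image_iff) (metis add.commute diff_add_cancel)
    qed (use fin in auto)
    also have "\<dots> = (\<Sum>n\<in>P. p n * e (l + n))"
      by (simp add: sum.reindex)
    also have "\<dots> = e l * (\<Sum>n\<in>P. p n * e n)"
      by (simp add: e_add sum_distrib_left mult_ac)
    finally show ?thesis .
  qed
  have "tp (mask_mult a p) w = 1/2 * (\<Sum>k\<in>T. mask_mult a p k * e k)"
    using fin(3) support_mask_mult_subset unfolding e_def T_def A_def P_def
    by (rule tp_eq_sum_superset)
  also have "\<dots> = 1/4 * (\<Sum>k\<in>T. \<Sum>l\<in>A. a l * (p (k - l) * e k))"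
    by (simp add: mask_mult_def A_def sum_distrib_left sum_distrib_right mult_ac)
  also have "\<dots> = 1/4 * (\<Sum>l\<in>A. a l * (\<Sum>k\<in>T. p (k - l) * e k))"
    by (simp add: sum.swap[of _ T] sum_distrib_left)
  also have "\<dots> = 1/4 * (\<Sum>l\<in>A. a l * (e l * (\<Sum>n\<in>P. p n * e n)))"
    by (simp add: shift)
  also have "\<dots> = (1/2 * (\<Sum>l\<in>A. a l * e l)) * (1/2 * (\<Sum>n\<in>P. p n * e n))"
    by (simp only: mult.assoc[symmetric] sum_distrib_right[symmetric]) simp
  also have "\<dots> = tp a w * tp p w"
    by (simp only: tp_def e_def A_def P_def)
  finally show ?thesis .
qed

definition tp_corr :: "real \<Rightarrow> real \<Rightarrow> (int \<Rightarrow> complex) \<Rightarrow> complex" where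
  "tp_corr w w' m = tp m (of_real w) * cnj (tp m (of_real w'))"

definition uep_sum :: "real \<Rightarrow> real \<Rightarrow> (int \<Rightarrow> complex) \<Rightarrow> (int \<Rightarrow> complex) list \<Rightarrow> complex" where
  "uep_sum w w' p qs = tp_corr w w' p + (\<Sum>q\<leftarrow>qs. tp_corr w w' q)"

lemma UEP_iff_uep_sum:
  "UEP p qs \<longleftrightarrow>
     (\<forall>w. 0 \<le> w \<and> w < 1 \<longrightarrow> uep_sum w w p qs = 1 \<and> uep_sum w (w - 1/2) p qs = 0)"
  unfolding UEP_def uep_sum_def tp_corr_def ..

lemma tp_corr_mask_mult:
  assumes "fin_supp x" "fin_supp y"
  shows "tp_corr w w' (mask_mult x y) = tp_corr w w' x * tp_corr w w' y"
  using assms by (simp add: tp_corr_def tp_mask_mult mult_ac)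

lemma sum_list_tp_corr_map_mask_mult:
  assumes "fin_supp x" "\<forall>y\<in>set ys. fin_supp y"
  shows "(\<Sum>y\<leftarrow>ys. tp_corr w w' (mask_mult x y)) = tp_corr w w' x * (\<Sum>y\<leftarrow>ys. tp_corr w w' y)"
  using assms(2) by (induction ys) (simp_all add: tp_corr_mask_mult[OF assms(1)] distrib_left)

definition product_family ::
    "(int \<Rightarrow> complex) \<Rightarrow> (int \<Rightarrow> complex) list \<Rightarrow> (int \<Rightarrow> complex) \<Rightarrow> (int \<Rightarrow> complex) list
       \<Rightarrow> (int \<Rightarrow> complex) list" where
  "product_family a bs p qs =
     map (\<lambda>b. mask_mult p b) bs @ map (\<lambda>q. mask_mult a q) qs
       @ concat (map (\<lambda>q. map (\<lambda>b. mask_mult q b) bs) qs)"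

lemma uep_sum_product_family:
  assumes "fin_supp a" "fin_supp p" "\<forall>b\<in>set bs. fin_supp b" "\<forall>q\<in>set qs. fin_supp q"
  shows "uep_sum w w' (mask_mult a p) (product_family a bs p qs) = uep_sum w w' a bs * uep_sum w w' p qs"
proof -
  have mixed: "(\<Sum>m\<leftarrow>concat (map (\<lambda>q. map (\<lambda>b. mask_mult q b) bs) qs). tp_corr w w' m)
      = (\<Sum>q\<leftarrow>qs. tp_corr w w' q) * (\<Sum>b\<leftarrow>bs. tp_corr w w' b)"
    using assms(4) by (induction qs) (simp_all add: sum_list_tp_corr_map_mask_mult assms(3) distrib_right o_def)
  show ?thesis
    using assms unfolding uep_sum_def product_family_def
    by (simp add: mixed sum_list_tp_corr_map_mask_mult tp_corr_mask_mult algebra_simps o_def)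
qed

lemma UEP_mask_mult:
  assumes "fin_supp a" "fin_supp p" "\<forall>b\<in>set bs. fin_supp b" "\<forall>q\<in>set qs. fin_supp q"
    and "UEP a bs" "UEP p qs"
  shows "UEP (mask_mult a p) (product_family a bs p qs)"
  using assms by (simp add: UEP_iff_uep_sum uep_sum_product_family)

lemma tp_holomorphic: "tp m holomorphic_on UNIV"
  unfolding tp_def by (intro holomorphic_intros)

lemma higher_deriv_tp_mask_mult:
  assumes "fin_supp x" "fin_supp y"
  shows "(deriv ^^ k) (tp (mask_mult x y)) z =
    (\<Sum>i = 0..k. of_nat (k choose i) * (deriv ^^ i) (tp x) z * (deriv ^^ (k - i)) (tp y) z)"
proof -
  have "tp (mask_mult x y) = (\<lambda>z. tp x z * tp y z)"
    using assms by (simp add: tp_mask_mult fun_eq_iff)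
  then show ?thesis
    using higher_deriv_mult[OF tp_holomorphic tp_holomorphic open_UNIV] by simp
qed

lemma higher_deriv_tp_mask_mult_eq_0:
  assumes "fin_supp x" "fin_supp y"
    and "\<forall>i<r. (deriv ^^ i) (tp x) z = 0" "\<forall>i<s. (deriv ^^ i) (tp y) z = 0"
    and "k < r + s"
  shows "(deriv ^^ k) (tp (mask_mult x y)) z = 0"
  unfolding higher_deriv_tp_mask_mult[OF assms(1,2)]
proof (intro sum.neutral ballI)
  fix i assume "i \<in> {0..k}"
  then have "i < r \<or> k - i < s" using assms(5) by auto
  then show "of_nat (k choose i) * (deriv ^^ i) (tp x) z * (deriv ^^ (k - i)) (tp y) z = 0"
    using assms(3,4) by auto
qed

lemma higher_deriv_tp_mask_mult_lowest:
  assumes "fin_supp x" "fin_supp y"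
    and "\<forall>i<r. (deriv ^^ i) (tp x) z = 0" "\<forall>i<s. (deriv ^^ i) (tp y) z = 0"
  shows "(deriv ^^ (r + s)) (tp (mask_mult x y)) z =
    of_nat ((r + s) choose r) * (deriv ^^ r) (tp x) z * (deriv ^^ s) (tp y) z"
proof -
  have "(\<Sum>i \<in> {0..r + s} - {r}. of_nat ((r + s) choose i) * (deriv ^^ i) (tp x) z
      * (deriv ^^ (r + s - i)) (tp y) z) = 0"
  proof (intro sum.neutral ballI)
    fix i assume "i \<in> {0..r + s} - {r}"
    then have "i < r \<or> r + s - i < s" by auto
    then show "of_nat ((r + s) choose i) * (deriv ^^ i) (tp x) z * (deriv ^^ (r + s - i)) (tp y) z = 0"
      using assms(3,4) by auto
  qed
  then show ?thesis
    unfolding higher_deriv_tp_mask_mult[OF assms(1,2)] by (simp add: sum.remove[of _ r])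
qed

lemma tp_0_nonzero_if_UEP:
  assumes "UEP p qs" "\<forall>q\<in>set qs. tp q 0 = 0"
  shows "tp p 0 \<noteq> 0"
proof
  assume "tp p 0 = 0"
  moreover have "(\<Sum>q\<leftarrow>qs. tp_corr 0 0 q) = 0"
    using assms(2) by (induction qs) (simp_all add: tp_corr_def)
  ultimately have "uep_sum 0 0 p qs = 0"
    by (simp add: uep_sum_def tp_corr_def)
  moreover have "uep_sum 0 0 p qs = 1"
    using assms(1) unfolding UEP_iff_uep_sum by simp
  ultimately show False by simp
qed

lemma tp_0_nonzero_if_vanishing_moments:
  assumes "UEP p qs" "vanishing_moments qs v" "0 < v"
  shows "tp p 0 \<noteq> 0"
proof (rule tp_0_nonzero_if_UEP[OF assms(1)])
  show "\<forall>q\<in>set qs. tp q 0 = 0"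
    using assms(2,3) unfolding vanishing_moments_def by (metis funpow_0)
qed

lemma higher_deriv_product_family_eq_0:
  assumes "fin_supp a" "fin_supp p" "\<forall>b\<in>set bs. fin_supp b" "\<forall>q\<in>set qs. fin_supp q"
    and "vanishing_moments bs va" "vanishing_moments qs vp"
    and "m \<in> set (product_family a bs p qs)" "k < min va vp"
  shows "(deriv ^^ k) (tp m) 0 = 0"
proof -
  have b_vanish: "\<forall>i<va. (deriv ^^ i) (tp b) 0 = 0" if "b \<in> set bs" for b
    using assms(5) that unfolding vanishing_moments_def by blast
  have q_vanish: "\<forall>i<vp. (deriv ^^ i) (tp q) 0 = 0" if "q \<in> set qs" for q
    using assms(6) that unfolding vanishing_moments_def by blast
  from assms(7) consider
      b where "b \<in> set bs" "m = mask_mult p b"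
    | q where "q \<in> set qs" "m = mask_mult a q"
    | q b where "q \<in> set qs" "b \<in> set bs" "m = mask_mult q b"
    unfolding product_family_def by auto
  then show ?thesis
  proof cases
    case (1 b)
    then show ?thesis
      using assms higher_deriv_tp_mask_mult_eq_0[of p b 0 0 va k] b_vanish by auto
  next
    case (2 q)
    then show ?thesis
      using assms higher_deriv_tp_mask_mult_eq_0[of a q 0 0 vp k] q_vanish by auto
  next
    case (3 q b)
    then show ?thesis
      using assms higher_deriv_tp_mask_mult_eq_0[of q b vp 0 va k] b_vanish q_vanish by auto
  qed
qed

lemma higher_deriv_product_family_nonzero:
  assumes fin: "fin_supp a" "fin_supp p" "\<forall>b\<in>set bs. fin_supp b" "\<forall>q\<in>set qs. fin_supp q"
    and uep: "UEP a bs" "UEP p qs"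
    and vm: "vanishing_moments bs va" "vanishing_moments qs vp"
  shows "\<exists>m\<in>set (product_family a bs p qs). (deriv ^^ min va vp) (tp m) 0 \<noteq> 0"
proof -
  obtain b where b: "b \<in> set bs" "(deriv ^^ va) (tp b) 0 \<noteq> 0"
    using vm(1) unfolding vanishing_moments_def by blast
  obtain q where q: "q \<in> set qs" "(deriv ^^ vp) (tp q) 0 \<noteq> 0"
    using vm(2) unfolding vanishing_moments_def by blast
  consider "vp < va" | "va \<le> vp" "0 < vp" | "va = 0" "vp = 0" by linarith
  then show ?thesis
  proof cases
    case 1
    have "(deriv ^^ vp) (tp (mask_mult a q)) 0 = tp a 0 * (deriv ^^ vp) (tp q) 0"
      using higher_deriv_tp_mask_mult_lowest[of a q 0 0 vp] fin q vm(2)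
      unfolding vanishing_moments_def by simp
    moreover have "tp a 0 \<noteq> 0"
      using 1 by (intro tp_0_nonzero_if_vanishing_moments[OF uep(1) vm(1)]) simp
    ultimately show ?thesis
      using 1 q unfolding product_family_def by (auto intro!: bexI[of _ "mask_mult a q"])
  next
    case 2
    have "(deriv ^^ va) (tp (mask_mult p b)) 0 = tp p 0 * (deriv ^^ va) (tp b) 0"
      using higher_deriv_tp_mask_mult_lowest[of p b 0 0 va] fin b vm(1)
      unfolding vanishing_moments_def by simp
    moreover have "tp p 0 \<noteq> 0"
      using 2 by (intro tp_0_nonzero_if_vanishing_moments[OF uep(2) vm(2)])
    ultimately show ?thesis
      using 2 b unfolding product_family_def by (auto intro!: bexI[of _ "mask_mult p b"])
  next
    case 3
    have "tp (mask_mult q b) 0 = tp q 0 * tp b 0"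
      using fin q b by (simp add: tp_mask_mult)
    then show ?thesis
      using 3 q b unfolding product_family_def by (auto intro!: bexI[of _ "mask_mult q b"])
  qed
qed

lemma vanishing_moments_product_family:
  assumes "fin_supp a" "fin_supp p" "\<forall>b\<in>set bs. fin_supp b" "\<forall>q\<in>set qs. fin_supp q"
    and "UEP a bs" "UEP p qs"
    and "vanishing_moments bs va" "vanishing_moments qs vp"
  shows "vanishing_moments (product_family a bs p qs) (min va vp)"
  unfolding vanishing_moments_def
  using higher_deriv_product_family_eq_0[OF assms(1-4,7,8)]
    higher_deriv_product_family_nonzero[OF assms] by blast

theorem theorem2:
  fixes a p :: "int \<Rightarrow> complex" and bs qs :: "(int \<Rightarrow> complex) list" and va vp :: nat
  assumes "fin_supp a" and "fin_supp p"
    and "\<forall>b\<in>set bs. fin_supp b" and "\<forall>q\<in>set qs. fin_supp q"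
    and "UEP a bs" and "UEP p qs"
  shows "UEP (mask_mult a p)
           (map (\<lambda>b. mask_mult p b) bs @ map (\<lambda>q. mask_mult a q) qs
             @ concat (map (\<lambda>q. map (\<lambda>b. mask_mult q b) bs) qs))
       \<and> (subdiv_convergent a \<and> subdiv_convergent p \<and> subdiv_convergent (mask_mult a p)
          \<and> vanishing_moments bs va \<and> vanishing_moments qs vp
          \<longrightarrow> vanishing_moments
                (map (\<lambda>b. mask_mult p b) bs @ map (\<lambda>q. mask_mult a q) qs
                  @ concat (map (\<lambda>q. map (\<lambda>b. mask_mult q b) bs) qs))
                (min va vp))"
  using UEP_mask_mult[OF assms] vanishing_moments_product_family[OF assms]
  unfolding product_family_def by blast

end
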